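(* Let $(A,G)$ be a stable admissible pair with $A\in M_{Q_0}(\mathbb Z)$. Assume that every cluster variable of $\mathcal A(A,\mathbf u)$ can be written as a Laurent polynomial with positive coefficients in the initial cluster $\mathbf u$. Then every cluster variable of $\mathcal A(A/G,\mathbf v)$ can be written as a Laurent polynomial with positive coefficients in the initial cluster $\mathbf v$.
   Context: $Q_0$ finite, $A=(a_{ij})$ skew-symmetrizable ($DA$ skew-symmetric for a positive integer diagonal $D$). Mutation of matrices: $\mu_k(B)=(b'_{ij})$ with $b'_{ij}=-b_{ij}$ if $k\in\{i,j\}$, else $b_{ij}+\tfrac12(|b_{ik}|b_{kj}+b_{ik}|b_{kj}|)$; of seeds: $x_k$ replaced by $x'_k$ with $x_kx'_k=\prod_{b_{ik}>0}x_i^{b_{ik}}+\prod_{b_{ik}<0}x_i^{-b_{ik}}$. The cluster algebra $\mathcal A(B,\mathbf w)$ is generated over $\mathbb Z$ by the cluster variables (entries of clusters of seeds mutation-equivalent to $(B,\mathbf w)$). A permutation $g$ of $Q_0$ is an automorphism of $B$ if $b_{gi,gj}=b_{ij}$; a group $G$ of automorphisms is admissible ($(B,G)$ admissible pair) if for distinct $i,j$ in the same orbit there is no path of length $1$ or $2$ from $i$ to $j$ in the quiver of $B$ ($b_{ij}\le0$ and no $k$ with $b_{ik}>0,b_{kj}>0$). With $\overline Q_0$ the set of orbits, $(A/G)_{\mathbf i,\mathbf j}=\sum_{k\in\mathbf i}a_{k,j}$ ($j\in\mathbf j$). Orbit mutation $\mu^G_{\mathbf i}=\prod_{j\in\mathbf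 i}\mu_j$; $(A,G)$ is stable if all $(\mu^G_{\mathbf i_m}\circ\cdots\circ\mu^G_{\mathbf i_1}(A),G)$ are admissible for all finite sequences of orbits. $\mathbf u=(u_i)_{i\in Q_0}$, $\mathbf v=(v_{\mathbf i})_{\mathbf i\in\overline Q_0}$ are indeterminates. *)

theory Defs
  imports Complex_Main "HOL-Library.Poly_Mapping"
begin

(* Exchange matrices: functions 'v => 'v => int. Vertex set is either the
   whole (finite) type, or an explicit set V (used for the set of G-orbits). *)

definition skew_symmetrizable :: "('a::finite \<Rightarrow> 'a \<Rightarrow> int) \<Rightarrow> bool" where
  "skew_symmetrizable A \<longleftrightarrow>
     (\<exists>D :: 'a \<Rightarrow> int. (\<forall>i. 0 < D i) \<and> (\<forall>i j. D i * A i j = - (D j * A j i)))"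

definition mat_mut :: "'v \<Rightarrow> ('v \<Rightarrow> 'v \<Rightarrow> int) \<Rightarrow> ('v \<Rightarrow> 'v \<Rightarrow> int)" where
  "mat_mut k B = (\<lambda>i j. if i = k \<or> j = k then - B i j
      else B i j + (\<bar>B i k\<bar> * B k j + B i k * \<bar>B k j\<bar>) div 2)"

(* cluster variables are represented by the rational functions they define,
   evaluated at points u with positive coordinates (a rational function is
   determined by these values). *)
type_synonym 'v ratfun = "('v \<Rightarrow> real) \<Rightarrow> real"

definition seed_mut :: "'v set \<Rightarrow> 'v \<Rightarrow> ('v \<Rightarrow> 'v \<Rightarrow> int) \<times> ('v \<Rightarrow> 'v ratfun)
     \<Rightarrow> ('v \<Rightarrow> 'v \<Rightarrow> int) \<times> ('v \<Rightarrow> 'v ratfun)" where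
  "seed_mut V k S = (case S of (B, x) \<Rightarrow>
     (mat_mut k B,
      x(k := (\<lambda>u. ((\<Prod>i\<in>{i\<in>V. B i k > 0}. x i u ^ nat (B i k))
                  + (\<Prod>i\<in>{i\<in>V. B i k < 0}. x i u ^ nat (- B i k))) / x k u))))"

inductive_set seeds :: "'v set \<Rightarrow> ('v \<Rightarrow> 'v \<Rightarrow> int) \<Rightarrow> (('v \<Rightarrow> 'v \<Rightarrow> int) \<times> ('v \<Rightarrow> 'v ratfun)) set"
  for V :: "'v set" and B0 :: "'v \<Rightarrow> 'v \<Rightarrow> int" where
  init: "(B0, (\<lambda>i u. u i)) \<in> seeds V B0"
| mut: "S \<in> seeds V B0 \<Longrightarrow> k \<in> V \<Longrightarrow> seed_mut V k S \<in> seeds V B0"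

definition cluster_vars :: "'v set \<Rightarrow> ('v \<Rightarrow> 'v \<Rightarrow> int) \<Rightarrow> 'v ratfun set" where
  "cluster_vars V B0 = {x i | B x i. (B, x) \<in> seeds V B0 \<and> i \<in> V}"

(* Laurent polynomials with integer coefficients: monomials are finitely
   supported exponent vectors 'v \<Rightarrow>\<^sub>0 int *)
definition monomial_eval :: "('v \<Rightarrow>\<^sub>0 int) \<Rightarrow> ('v \<Rightarrow> real) \<Rightarrow> real" where
  "monomial_eval mon u = (\<Prod>v\<in>Poly_Mapping.keys mon. u v powi (Poly_Mapping.lookup mon v))"

definition laurent_eval :: "(('v \<Rightarrow>\<^sub>0 int) \<Rightarrow>\<^sub>0 int) \<Rightarrow> ('v \<Rightarrow> real) \<Rightarrow> real" where
  "laurent_eval L u = (\<Sum>mon\<in>Poly_Mapping.keys L. real_of_int (Poly_Mapping.lookup L mon) * monomial_eval mon u)"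

(* f is a Laurent polynomial with positive (= nonnegative) coefficients
   in the initial cluster variables indexed by V *)
definition positive_laurent :: "'v set \<Rightarrow> 'v ratfun \<Rightarrow> bool" where
  "positive_laurent V f \<longleftrightarrow>
     (\<exists>L :: ('v \<Rightarrow>\<^sub>0 int) \<Rightarrow>\<^sub>0 int.
        (\<forall>m. 0 \<le> Poly_Mapping.lookup L m) \<and> (\<forall>m\<in>Poly_Mapping.keys L. Poly_Mapping.keys m \<subseteq> V) \<and>
        (\<forall>u. (\<forall>i. 0 < u i) \<longrightarrow> f u = laurent_eval L u))"

definition perm_group :: "('a \<Rightarrow> 'a) set \<Rightarrow> bool" where
  "perm_group G \<longleftrightarrow> id \<in> G \<and> (\<forall>g\<in>G. bij g) \<and> (\<forall>g\<in>G. \<forall>h\<in>G. g \<circ> h \<in> G)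
     \<and> (\<forall>g\<in>G. inv g \<in> G)"

definition automorphism :: "('a \<Rightarrow> 'a \<Rightarrow> int) \<Rightarrow> ('a \<Rightarrow> 'a) \<Rightarrow> bool" where
  "automorphism B g \<longleftrightarrow> bij g \<and> (\<forall>i j. B (g i) (g j) = B i j)"

definition orbit :: "('a \<Rightarrow> 'a) set \<Rightarrow> 'a \<Rightarrow> 'a set" where
  "orbit G i = (\<lambda>g. g i) ` G"

definition orbits :: "('a \<Rightarrow> 'a) set \<Rightarrow> 'a set set" where
  "orbits G = range (orbit G)"

definition admissible :: "('a \<Rightarrow> 'a \<Rightarrow> int) \<Rightarrow> ('a \<Rightarrow> 'a) set \<Rightarrow> bool" where
  "admissible B G \<longleftrightarrow> perm_group G \<and> (\<forall>g\<in>G. automorphism B g) \<and>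
     (\<forall>i j. i \<noteq> j \<and> j \<in> orbit G i \<longrightarrow> B i j \<le> 0 \<and> \<not> (\<exists>k. B i k > 0 \<and> B k j > 0))"

(* orbit mutation: product of mu_j over j in the orbit (taken in some order;
   for admissible pairs these mutations commute) *)
definition orbit_mut :: "'a set \<Rightarrow> ('a \<Rightarrow> 'a \<Rightarrow> int) \<Rightarrow> ('a \<Rightarrow> 'a \<Rightarrow> int)" where
  "orbit_mut I B = fold mat_mut (SOME xs. distinct xs \<and> set xs = I) B"

definition stable :: "('a \<Rightarrow> 'a \<Rightarrow> int) \<Rightarrow> ('a \<Rightarrow> 'a) set \<Rightarrow> bool" where
  "stable B G \<longleftrightarrow> (\<forall>Is. set Is \<subseteq> orbits G \<longrightarrow> admissible (fold orbit_mut Is B) G)"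

definition quot_mat :: "('a \<Rightarrow> 'a \<Rightarrow> int) \<Rightarrow> ('a \<Rightarrow> 'a) set \<Rightarrow> 'a set \<Rightarrow> 'a set \<Rightarrow> int" where
  "quot_mat A G I J = (\<Sum>k\<in>I. A k (SOME j. j \<in> J))"

end

theory Submission
  imports Defs
begin

(* Folding commutes with mutation. Mutating A/G at an orbit K corresponds to mutating A at all
   vertices of K; by stability these vertices stay pairwise unconnected, so the single mutations
   commute. Along every mutation sequence of A/G one therefore has a seed of A whose exchange
   matrix folds to the one of A/G and whose cluster variables specialise, under u_j := v_(Gj),
   to those of A/G: admissibility makes every orbit block of the exchange matrix sign-coherent,
   so the correction terms of matrix mutation and the exchange monomials add up over orbits.
   A Laurent polynomial with nonnegative coefficients stays one under this specialisation. *)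

lemma lookup_frag_extend_frag_of:
  "Poly_Mapping.lookup (frag_extend (frag_of \<circ> h) x) b =
     (\<Sum>a\<in>{a\<in>Poly_Mapping.keys x. h a = b}. Poly_Mapping.lookup x a)"
  unfolding frag_extend_def lookup_sum by (simp add: sum.inter_filter, intro sum.cong) auto

lemma keys_frag_extend_frag_of:
  "Poly_Mapping.keys (frag_extend (frag_of \<circ> h) x) \<subseteq> h ` Poly_Mapping.keys x"
  using keys_frag_extend[of "frag_of \<circ> h" x] by auto

lemma monomial_eval_superset:
  assumes "finite S" "Poly_Mapping.keys m \<subseteq> S"
  shows "monomial_eval m u = (\<Prod>a\<in>S. u a powi Poly_Mapping.lookup m a)"
  unfolding monomial_eval_def
  by (rule prod.mono_neutral_left) (use assms in \<open>auto simp: in_keys_iff\<close>)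

lemma laurent_eval_superset:
  assumes "finite S" "Poly_Mapping.keys L \<subseteq> S"
  shows "laurent_eval L u = (\<Sum>m\<in>S. real_of_int (Poly_Mapping.lookup L m) * monomial_eval m u)"
  unfolding laurent_eval_def
  by (rule sum.mono_neutral_left) (use assms in \<open>auto simp: in_keys_iff\<close>)

lemma power_int_sum:
  fixes x :: "'a::field"
  assumes "x \<noteq> 0"
  shows "x powi (\<Sum>a\<in>S. f a) = (\<Prod>a\<in>S. x powi f a)"
  using assms by (induction S rule: infinite_finite_induct) (simp_all add: power_int_add)

lemma monomial_eval_frag_extend:
  assumes "\<forall>b. u b \<noteq> 0"
  shows "monomial_eval (frag_extend (frag_of \<circ> h) m) u = monomial_eval m (\<lambda>a. u (h a))"
proof -
  let ?m' = "frag_extend (frag_of \<circ> h) m" and ?K = "Poly_Mapping.keys m"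
  have "monomial_eval ?m' u = (\<Prod>b\<in>h ` ?K. u b powi Poly_Mapping.lookup ?m' b)"
    by (rule monomial_eval_superset) (simp_all add: keys_frag_extend_frag_of)
  also have "\<dots> = (\<Prod>b\<in>h ` ?K. \<Prod>a\<in>{a\<in>?K. h a = b}. u (h a) powi Poly_Mapping.lookup m a)"
    unfolding lookup_frag_extend_frag_of using assms
    by (intro prod.cong refl) (simp add: power_int_sum)
  also have "\<dots> = monomial_eval m (\<lambda>a. u (h a))"
    unfolding monomial_eval_def by (rule prod.group) auto
  finally show ?thesis .
qed

lemma laurent_eval_frag_extend:
  assumes "\<And>m. m \<in> Poly_Mapping.keys L \<Longrightarrow> monomial_eval (\<phi> m) u = monomial_eval m u'"
  shows "laurent_eval (frag_extend (frag_of \<circ> \<phi>) L) u = laurent_eval L u'"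
proof -
  let ?L' = "frag_extend (frag_of \<circ> \<phi>) L" and ?K = "Poly_Mapping.keys L"
  have "laurent_eval ?L' u = (\<Sum>m'\<in>\<phi> ` ?K. real_of_int (Poly_Mapping.lookup ?L' m') * monomial_eval m' u)"
    by (rule laurent_eval_superset) (simp_all add: keys_frag_extend_frag_of)
  also have "\<dots> = (\<Sum>m'\<in>\<phi> ` ?K. \<Sum>m\<in>{m\<in>?K. \<phi> m = m'}. real_of_int (Poly_Mapping.lookup L m) * monomial_eval (\<phi> m) u)"
    unfolding lookup_frag_extend_frag_of by (auto simp: sum_distrib_right intro!: sum.cong)
  also have "\<dots> = (\<Sum>m\<in>?K. real_of_int (Poly_Mapping.lookup L m) * monomial_eval (\<phi> m) u)"
    by (rule sum.group) auto
  also have "\<dots> = laurent_eval L u'"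
    unfolding laurent_eval_def using assms by simp
  finally show ?thesis .
qed

lemma positive_laurent_substitute:
  assumes "positive_laurent V f"
  shows "positive_laurent (h ` V) (\<lambda>v. f (\<lambda>j. v (h j)))"
proof -
  obtain L where nonneg: "\<forall>m. 0 \<le> Poly_Mapping.lookup L m"
    and vars: "\<forall>m\<in>Poly_Mapping.keys L. Poly_Mapping.keys m \<subseteq> V"
    and eval: "\<forall>u. (\<forall>i. 0 < u i) \<longrightarrow> f u = laurent_eval L u"
    using assms unfolding positive_laurent_def by blast
  \<comment> \<open>rename the variables of every monomial of L along h; colliding monomials add up\<close>
  define L' where "L' = frag_extend (frag_of \<circ> frag_extend (frag_of \<circ> h)) L"
  have "\<forall>m. 0 \<le> Poly_Mapping.lookup L' m"
    unfolding L'_def lookup_frag_extend_frag_of using nonneg by (simp add: sum_nonneg)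
  moreover have "\<forall>m\<in>Poly_Mapping.keys L'. Poly_Mapping.keys m \<subseteq> h ` V"
  proof
    fix m' assume "m' \<in> Poly_Mapping.keys L'"
    then have "m' \<in> frag_extend (frag_of \<circ> h) ` Poly_Mapping.keys L"
      unfolding L'_def by (rule subsetD[OF keys_frag_extend_frag_of])
    then obtain m where "m \<in> Poly_Mapping.keys L" "m' = frag_extend (frag_of \<circ> h) m"
      by blast
    then show "Poly_Mapping.keys m' \<subseteq> h ` V"
      using vars keys_frag_extend_frag_of[of h m] by blast
  qed
  moreover have "f (\<lambda>j. u (h j)) = laurent_eval L' u" if pos: "\<forall>i. 0 < u i" for u
  proof -
    have "f (\<lambda>j. u (h j)) = laurent_eval L (\<lambda>j. u (h j))"
      using eval pos by simp
    also have "\<dots> = laurent_eval L' u"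
      unfolding L'_def using pos
      by (intro laurent_eval_frag_extend[symmetric]) (simp add: monomial_eval_frag_extend less_imp_neq[symmetric])
    finally show ?thesis .
  qed
  ultimately show ?thesis unfolding positive_laurent_def by blast
qed

definition mut_shift :: "int \<Rightarrow> int \<Rightarrow> int" where
  "mut_shift a b = (\<bar>a\<bar> * b + a * \<bar>b\<bar>) div 2"

lemma mut_shift_eq:
  "mut_shift a b = (if 0 < a \<and> 0 < b then a * b else if a < 0 \<and> b < 0 then - (a * b) else 0)"
proof -
  have "\<bar>a\<bar> * b + a * \<bar>b\<bar> = 2 * (if 0 < a \<and> 0 < b then a * b else if a < 0 \<and> b < 0 then - (a * b) else 0)"
    by (auto simp: abs_if not_less)
  then show ?thesis unfolding mut_shift_def by simp
qed

lemma mut_shift_double: "2 * mut_shift a b = \<bar>a\<bar> * b + a * \<bar>b\<bar>"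
  by (auto simp: mut_shift_eq abs_if not_less)

lemma mut_shift_zero [simp]: "mut_shift 0 b = 0" "mut_shift a 0 = 0"
  by (simp_all add: mut_shift_def)

lemma mut_shift_sign:
  assumes "\<sigma> \<in> {1, -1}" "\<tau> \<in> {1, -1}" "0 \<le> \<sigma> * a" "0 \<le> \<tau> * b"
  shows "mut_shift a b = (if \<sigma> = \<tau> then \<sigma> * (a * b) else 0)"
  using assms by (auto simp: mut_shift_eq zero_le_mult_iff)

lemma mat_mut_eq:
  "mat_mut k B i j = (if i = k \<or> j = k then - B i j else B i j + mut_shift (B i k) (B k j))"
  by (simp add: mat_mut_def mut_shift_def)

definition mat_mut_set :: "'v set \<Rightarrow> ('v \<Rightarrow> 'v \<Rightarrow> int) \<Rightarrow> 'v \<Rightarrow> 'v \<Rightarrow> int" where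
  "mat_mut_set S B i j =
     (if i \<in> S \<or> j \<in> S then - B i j else B i j + (\<Sum>k\<in>S. mut_shift (B i k) (B k j)))"

lemma mat_mut_set_col:
  "finite S \<Longrightarrow> j \<notin> S \<Longrightarrow> \<forall>k\<in>S. B k j = 0 \<Longrightarrow> mat_mut_set S B i j = B i j"
  by (auto simp: mat_mut_set_def)

lemma mat_mut_set_row:
  "finite S \<Longrightarrow> i \<notin> S \<Longrightarrow> \<forall>k\<in>S. B i k = 0 \<Longrightarrow> mat_mut_set S B i j = B i j"
  by (auto simp: mat_mut_set_def)

lemma fold_mat_mut_eq_mat_mut_set:
  assumes "distinct xs" "\<forall>k\<in>set xs. \<forall>k'\<in>set xs. B k k' = 0"
  shows "fold mat_mut xs B = mat_mut_set (set xs) B"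
  using assms
proof (induction xs rule: rev_induct)
  case Nil
  then show ?case by (auto simp: mat_mut_set_def fun_eq_iff)
next
  case (snoc x xs)
  let ?S = "set xs"
  have IH: "fold mat_mut xs B = mat_mut_set ?S B" and x: "x \<notin> ?S"
    using snoc by auto
  have zero: "\<forall>k\<in>insert x ?S. \<forall>k'\<in>insert x ?S. B k k' = 0"
    using snoc.prems by simp
  have col: "mat_mut_set ?S B i x = B i x" and row: "mat_mut_set ?S B x j = B x j" for i j
    using zero x by (auto intro: mat_mut_set_col mat_mut_set_row)
  show ?case
  proof (intro ext)
    fix i j
    show "fold mat_mut (xs @ [x]) B i j = mat_mut_set (set (xs @ [x])) B i j"
      using zero x by (simp add: IH mat_mut_eq) (auto simp: col row mat_mut_set_def)
  qed
qed

definition exchange_var :: "'v set \<Rightarrow> ('v \<Rightarrow> 'v \<Rightarrow> int) \<Rightarrow> ('v \<Rightarrow> 'v ratfun) \<Rightarrow> 'v \<Rightarrow> 'v ratfun" where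
  "exchange_var V B x k = (\<lambda>u. ((\<Prod>i\<in>{i\<in>V. B i k > 0}. x i u ^ nat (B i k))
                              + (\<Prod>i\<in>{i\<in>V. B i k < 0}. x i u ^ nat (- B i k))) / x k u)"

lemma seed_mut_eq: "seed_mut V k (B, x) = (mat_mut k B, x(k := exchange_var V B x k))"
  by (simp add: seed_mut_def exchange_var_def)

definition seed_mut_set :: "'v set \<Rightarrow> 'v set \<Rightarrow> ('v \<Rightarrow> 'v \<Rightarrow> int) \<Rightarrow> ('v \<Rightarrow> 'v ratfun)
     \<Rightarrow> ('v \<Rightarrow> 'v \<Rightarrow> int) \<times> ('v \<Rightarrow> 'v ratfun)" where
  "seed_mut_set V K B x = (mat_mut_set K B, \<lambda>k. if k \<in> K then exchange_var V B x k else x k)"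

lemma fold_seed_mut_eq_seed_mut_set:
  assumes "distinct xs" "\<forall>k\<in>set xs. \<forall>k'\<in>set xs. B k k' = 0"
  shows "fold (seed_mut V) xs (B, x) = seed_mut_set V (set xs) B x"
  using assms
proof (induction xs rule: rev_induct)
  case Nil
  then show ?case using fold_mat_mut_eq_mat_mut_set[of "[]" B] by (auto simp: seed_mut_set_def)
next
  case (snoc y xs)
  let ?S = "set xs" and ?x = "\<lambda>k. if k \<in> set xs then exchange_var V B x k else x k"
  have IH: "fold (seed_mut V) xs (B, x) = (mat_mut_set ?S B, ?x)" and y: "y \<notin> ?S"
    using snoc by (auto simp: seed_mut_set_def)
  have zero: "\<forall>k\<in>insert y ?S. \<forall>k'\<in>insert y ?S. B k k' = 0"
    using snoc.prems by simp
  have col: "mat_mut_set ?S B i y = B i y" for i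
    using zero y by (intro mat_mut_set_col) auto
  have mat: "mat_mut y (mat_mut_set ?S B) = mat_mut_set (insert y ?S) B"
    using fold_mat_mut_eq_mat_mut_set[of "xs @ [y]" B] fold_mat_mut_eq_mat_mut_set[of xs B] snoc.prems
    by simp
  \<comment> \<open>the neighbours of y lie outside xs, so their variables are not yet mutated\<close>
  have "exchange_var V (mat_mut_set ?S B) ?x y = exchange_var V B x y"
    unfolding exchange_var_def col using zero y
    by (intro ext arg_cong2[where f = "(/)"] arg_cong2[where f = "(+)"] prod.cong) auto
  then show ?case
    using y by (auto simp: IH seed_mut_eq mat seed_mut_set_def fun_eq_iff)
qed

lemma fold_seed_mut_in_seeds:
  "S \<in> seeds V B0 \<Longrightarrow> set xs \<subseteq> V \<Longrightarrow> fold (seed_mut V) xs S \<in> seeds V B0"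
proof (induction xs arbitrary: S)
  case (Cons k xs)
  then have "seed_mut V k S \<in> seeds V B0"
    by (intro seeds.mut) simp_all
  with Cons show ?case by simp
qed simp

definition skew_symmetrizer :: "('a \<Rightarrow> int) \<Rightarrow> ('a \<Rightarrow> 'a \<Rightarrow> int) \<Rightarrow> bool" where
  "skew_symmetrizer D B \<longleftrightarrow> (\<forall>i. 0 < D i) \<and> (\<forall>i j. D i * B i j = - (D j * B j i))"

lemma skew_symmetrizable_iff: "skew_symmetrizable B \<longleftrightarrow> (\<exists>D. skew_symmetrizer D B)"
  by (simp add: skew_symmetrizable_def skew_symmetrizer_def)

lemma skew_symmetrizer_sgn:
  assumes "skew_symmetrizer D B"
  shows "sgn (B j i) = - sgn (B i j)"
proof -
  have skew: "D i * B i j = - (D j * B j i)" and "0 < D i" "0 < D j"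
    using assms unfolding skew_symmetrizer_def by blast+
  have "sgn (B i j) = sgn (D i * B i j)"
    using \<open>0 < D i\<close> by (simp add: sgn_mult)
  also have "\<dots> = - sgn (D j * B j i)"
    by (simp add: skew sgn_minus)
  also have "\<dots> = - sgn (B j i)"
    using \<open>0 < D j\<close> by (simp add: sgn_mult)
  finally show ?thesis by linarith
qed

lemma skew_symmetrizer_mat_mut:
  assumes "skew_symmetrizer D B"
  shows "skew_symmetrizer D (mat_mut k B)"
proof -
  have pos: "\<And>i. 0 < D i" and skew: "\<And>i j. D i * B i j = - (D j * B j i)"
    using assms unfolding skew_symmetrizer_def by blast+
  have shift: "D i * mut_shift (B i k) (B k j) = - (D j * mut_shift (B j k) (B k i))" for i j
  proof -
    have "D i * (2 * mut_shift (B i k) (B k j)) = \<bar>D i * B i k\<bar> * B k j + (D i * B i k) * \<bar>B k j\<bar>"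
      using pos[of i] by (simp add: mut_shift_double abs_mult algebra_simps)
    also have "\<dots> = \<bar>B k i\<bar> * (D k * B k j) - B k i * \<bar>D k * B k j\<bar>"
      unfolding skew[of i k] using pos[of k] by (simp add: abs_mult)
    also have "\<dots> = - (D j * (\<bar>B j k\<bar> * B k i + B j k * \<bar>B k i\<bar>))"
      unfolding skew[of k j] using pos[of j] by (simp add: abs_mult algebra_simps)
    also have "\<dots> = - (D j * (2 * mut_shift (B j k) (B k i)))"
      by (simp add: mut_shift_double)
    finally show ?thesis by linarith
  qed
  show ?thesis
    unfolding skew_symmetrizer_def
  proof (intro conjI allI)
    fix i j
    show "D i * mat_mut k B i j = - (D j * mat_mut k B j i)"
      using skew[of i j] shift[of i j] by (simp add: mat_mut_eq algebra_simps)
  qed (rule pos)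
qed

lemma skew_symmetrizer_fold_orbit_mut:
  assumes "skew_symmetrizer D B"
  shows "skew_symmetrizer D (fold orbit_mut Is B)"
proof -
  have fold_mut: "skew_symmetrizer D (fold mat_mut xs C)" if "skew_symmetrizer D C" for xs C
    using that by (induction xs arbitrary: C) (auto intro: skew_symmetrizer_mat_mut)
  show ?thesis
    using assms by (induction Is arbitrary: B) (auto simp: orbit_mut_def intro: fold_mut)
qed

lemma sum_mut_shift_sign_coherent:
  fixes a :: "'i \<Rightarrow> 'k \<Rightarrow> int" and b :: "'k \<Rightarrow> int"
  assumes "finite I" "finite K" "k0 \<in> K"
    and a: "(\<forall>i\<in>I. \<forall>k\<in>K. 0 \<le> a i k) \<or> (\<forall>i\<in>I. \<forall>k\<in>K. a i k \<le> 0)"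
    and b: "(\<forall>k\<in>K. 0 \<le> b k) \<or> (\<forall>k\<in>K. b k \<le> 0)"
    and s: "\<forall>k\<in>K. (\<Sum>i\<in>I. a i k) = s"
  shows "(\<Sum>i\<in>I. \<Sum>k\<in>K. mut_shift (a i k) (b k)) = mut_shift s (\<Sum>k\<in>K. b k)"
proof -
  obtain \<sigma> :: int where \<sigma>: "\<sigma> \<in> {1, -1}" "\<forall>i\<in>I. \<forall>k\<in>K. 0 \<le> \<sigma> * a i k"
    using a by (metis insertCI mult_1 mult_minus_left neg_0_le_iff_le)
  obtain \<tau> :: int where \<tau>: "\<tau> \<in> {1, -1}" "\<forall>k\<in>K. 0 \<le> \<tau> * b k"
    using b by (metis insertCI mult_1 mult_minus_left neg_0_le_iff_le)
  have "s = (\<Sum>i\<in>I. a i k0)"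
    using s \<open>k0 \<in> K\<close> by simp
  then have s_sign: "0 \<le> \<sigma> * s"
    using \<sigma>(2) \<open>k0 \<in> K\<close> by (simp add: sum_distrib_left sum_nonneg)
  have b_sign: "0 \<le> \<tau> * (\<Sum>k\<in>K. b k)"
    using \<tau>(2) by (simp add: sum_distrib_left sum_nonneg)
  have "(\<Sum>i\<in>I. \<Sum>k\<in>K. a i k * b k) = (\<Sum>k\<in>K. (\<Sum>i\<in>I. a i k) * b k)"
    by (subst sum.swap) (simp add: sum_distrib_right)
  then have bilinear: "(\<Sum>i\<in>I. \<Sum>k\<in>K. a i k * b k) = s * (\<Sum>k\<in>K. b k)"
    using s by (simp add: sum_distrib_left)
  have "(\<Sum>i\<in>I. \<Sum>k\<in>K. mut_shift (a i k) (b k))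
      = (\<Sum>i\<in>I. \<Sum>k\<in>K. if \<sigma> = \<tau> then \<sigma> * (a i k * b k) else 0)"
    using \<sigma> \<tau> by (intro sum.cong refl) (simp add: mut_shift_sign)
  also have "\<dots> = (if \<sigma> = \<tau> then \<sigma> * (s * (\<Sum>k\<in>K. b k)) else 0)"
    by (simp add: bilinear flip: sum_distrib_left)
  also have "\<dots> = mut_shift s (\<Sum>k\<in>K. b k)"
    using mut_shift_sign[OF \<sigma>(1) \<tau>(1) s_sign b_sign] by simp
  finally show ?thesis .
qed

lemma prod_power_pos_part:
  fixes c :: "'a \<Rightarrow> int" and w :: "'b::comm_monoid_mult"
  assumes "finite F" "(\<forall>i\<in>F. 0 \<le> c i) \<or> (\<forall>i\<in>F. c i \<le> 0)"
  shows "(\<Prod>i\<in>{i\<in>F. 0 < c i}. w ^ nat (c i)) = w ^ nat (\<Sum>i\<in>F. c i)"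
  using assms(2)
proof
  assume nonneg: "\<forall>i\<in>F. 0 \<le> c i"
  have "int (\<Sum>i\<in>{i\<in>F. 0 < c i}. nat (c i)) = (\<Sum>i\<in>{i\<in>F. 0 < c i}. c i)"
    by (simp add: of_nat_sum)
  also have "\<dots> = (\<Sum>i\<in>F. c i)"
    using assms(1) nonneg by (intro sum.mono_neutral_left) auto
  finally have "(\<Sum>i\<in>{i\<in>F. 0 < c i}. nat (c i)) = nat (\<Sum>i\<in>F. c i)"
    by linarith
  then show ?thesis by (simp flip: power_sum)
next
  assume "\<forall>i\<in>F. c i \<le> 0"
  then show ?thesis by (auto simp: sum_nonpos not_less)
qed

lemma prod_power_group_fibres:
  fixes p :: "'a \<Rightarrow> 'b" and c :: "'a \<Rightarrow> int" and w :: "'b \<Rightarrow> 'c::comm_monoid_mult"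
  assumes "finite X"
    and sign: "\<forall>J\<in>p ` X. (\<forall>i\<in>X. p i = J \<longrightarrow> 0 \<le> c i) \<or> (\<forall>i\<in>X. p i = J \<longrightarrow> c i \<le> 0)"
  shows "(\<Prod>i\<in>{i\<in>X. 0 < c i}. w (p i) ^ nat (c i))
       = (\<Prod>J\<in>{J\<in>p ` X. 0 < (\<Sum>i\<in>{i\<in>X. p i = J}. c i)}. w J ^ nat (\<Sum>i\<in>{i\<in>X. p i = J}. c i))"
proof -
  have "(\<Prod>i\<in>{i\<in>X. 0 < c i}. w (p i) ^ nat (c i))
      = (\<Prod>J\<in>p ` X. \<Prod>i\<in>{i\<in>{i\<in>X. 0 < c i}. p i = J}. w (p i) ^ nat (c i))"
    using \<open>finite X\<close> by (intro prod.group[symmetric]) auto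
  also have "\<dots> = (\<Prod>J\<in>p ` X. \<Prod>i\<in>{i\<in>{i\<in>X. p i = J}. 0 < c i}. w J ^ nat (c i))"
    by (intro prod.cong refl) auto
  also have "\<dots> = (\<Prod>J\<in>p ` X. w J ^ nat (\<Sum>i\<in>{i\<in>X. p i = J}. c i))"
    using \<open>finite X\<close> sign by (intro prod.cong refl prod_power_pos_part) auto
  also have "\<dots> = (\<Prod>J\<in>{J\<in>p ` X. 0 < (\<Sum>i\<in>{i\<in>X. p i = J}. c i)}. w J ^ nat (\<Sum>i\<in>{i\<in>X. p i = J}. c i))"
    using \<open>finite X\<close> by (intro prod.mono_neutral_right) (auto simp: not_less)
  finally show ?thesis .
qed

lemma orbit_self: "perm_group G \<Longrightarrow> i \<in> orbit G i"
  unfolding perm_group_def orbit_def by (metis id_apply image_eqI)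

lemma orbit_eq:
  assumes "perm_group G" "j \<in> orbit G i"
  shows "orbit G j = orbit G i"
proof -
  have sub: "orbit G (g k) \<subseteq> orbit G k" if "g \<in> G" for g k
  proof
    fix x assume "x \<in> orbit G (g k)"
    then obtain h where "h \<in> G" "x = (h \<circ> g) k"
      unfolding orbit_def by auto
    moreover have "h \<circ> g \<in> G" if "h \<in> G" for h
      using assms(1) \<open>g \<in> G\<close> that unfolding perm_group_def by blast
    ultimately show "x \<in> orbit G k"
      unfolding orbit_def by blast
  qed
  obtain g where g: "g \<in> G" "j = g i"
    using assms(2) unfolding orbit_def by auto
  moreover have "inv g \<in> G" "inv g j = i"
    using assms(1) g unfolding perm_group_def by (auto simp: bij_is_inj)
  ultimately show ?thesis
    using sub by (metis subset_antisym)
qed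

lemma orbits_eq_orbit:
  assumes "perm_group G" "I \<in> orbits G" "i \<in> I"
  shows "I = orbit G i"
proof -
  obtain c where c: "I = orbit G c"
    using assms(2) unfolding orbits_def by blast
  then have "orbit G i = orbit G c"
    using assms(3) by (intro orbit_eq[OF assms(1)]) simp
  with c show ?thesis by simp
qed

lemma orbit_fibre:
  assumes "perm_group G" "I \<in> orbits G"
  shows "{i. orbit G i = I} = I"
proof (intro set_eqI iffI)
  fix i assume "i \<in> {i. orbit G i = I}"
  then show "i \<in> I" using orbit_self[OF assms(1), of i] by simp
next
  fix i assume "i \<in> I"
  then show "i \<in> {i. orbit G i = I}" using orbits_eq_orbit[OF assms] by simp
qed

lemma prod_power_group_orbits:
  fixes c :: "'a::finite \<Rightarrow> int" and w :: "'a set \<Rightarrow> 'c::comm_monoid_mult"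
  assumes "perm_group G" and sign: "\<forall>J\<in>orbits G. (\<forall>j\<in>J. 0 \<le> c j) \<or> (\<forall>j\<in>J. c j \<le> 0)"
  shows "(\<Prod>j | 0 < c j. w (orbit G j) ^ nat (c j))
       = (\<Prod>J\<in>{J\<in>orbits G. 0 < (\<Sum>j\<in>J. c j)}. w J ^ nat (\<Sum>j\<in>J. c j))"
proof -
  have sign_fibre: "(\<forall>j\<in>UNIV. orbit G j = J \<longrightarrow> 0 \<le> c j) \<or> (\<forall>j\<in>UNIV. orbit G j = J \<longrightarrow> c j \<le> 0)"
    if "J \<in> orbits G" for J
  proof -
    have "orbit G j = J \<longleftrightarrow> j \<in> J" for j
      using orbit_fibre[OF assms(1) that] by (simp add: set_eq_iff)
    then show ?thesis
      using sign that by blast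
  qed
  have "(\<Prod>j\<in>{j\<in>UNIV. 0 < c j}. w (orbit G j) ^ nat (c j))
      = (\<Prod>J\<in>{J\<in>orbits G. 0 < (\<Sum>j\<in>{j\<in>UNIV. orbit G j = J}. c j)}.
           w J ^ nat (\<Sum>j\<in>{j\<in>UNIV. orbit G j = J}. c j))"
    unfolding orbits_def
    by (rule prod_power_group_fibres) (use sign_fibre in \<open>auto simp: orbits_def\<close>)
  also have "\<dots> = (\<Prod>J\<in>{J\<in>orbits G. 0 < (\<Sum>j\<in>J. c j)}. w J ^ nat (\<Sum>j\<in>J. c j))"
    by (intro prod.cong) (auto simp: orbit_fibre[OF assms(1)])
  finally show ?thesis by simp
qed

lemma bij_betw_orbit:
  assumes "perm_group G" "g \<in> G" "I \<in> orbits G"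
  shows "bij_betw g I I"
proof -
  have maps: "h i \<in> I" if "h \<in> G" "i \<in> I" for h i
    using orbits_eq_orbit[OF assms(1,3) \<open>i \<in> I\<close>] that unfolding orbit_def by blast
  have "bij g" "inv g \<in> G"
    using assms(1,2) unfolding perm_group_def by auto
  have "j \<in> g ` I" if "j \<in> I" for j
  proof
    show "inv g j \<in> I" using maps[OF \<open>inv g \<in> G\<close> that] .
    show "j = g (inv g j)" using \<open>bij g\<close> by (simp add: bij_is_surj surj_f_inv_f)
  qed
  then have "g ` I = I"
    using maps[OF assms(2)] by blast
  with \<open>bij g\<close> show ?thesis
    using bij_betw_subset[of g UNIV UNIV I I] by simp
qed

definition is_folding :: "('a \<Rightarrow> 'a) set \<Rightarrow> ('a \<Rightarrow> 'a \<Rightarrow> int) \<times> ('a \<Rightarrow> 'a ratfun)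
    \<Rightarrow> ('a set \<Rightarrow> 'a set \<Rightarrow> int) \<times> ('a set \<Rightarrow> 'a set ratfun) \<Rightarrow> bool" where
  "is_folding G S S' \<longleftrightarrow>
     (\<forall>I\<in>orbits G. \<forall>J\<in>orbits G. fst S' I J = quot_mat (fst S) G I J) \<and>
     (\<forall>i. snd S' (orbit G i) = (\<lambda>v. snd S i (\<lambda>j. v (orbit G j))))"

locale sign_skew_admissible =
  fixes B :: "'a::finite \<Rightarrow> 'a \<Rightarrow> int" and G :: "('a \<Rightarrow> 'a) set"
  assumes admissible: "admissible B G"
    and sgn_skew: "sgn (B j i) = - sgn (B i j)"
begin

lemma perm_group: "perm_group G"
  using admissible unfolding admissible_def by blast

lemma automorphism: "g \<in> G \<Longrightarrow> B (g i) (g j) = B i j"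
  using admissible unfolding admissible_def automorphism_def by blast

lemma pos_iff_neg: "0 < B i j \<longleftrightarrow> B j i < 0"
  using sgn_skew[of j i] by (auto simp: sgn_if split: if_splits)

lemma diag_eq_0: "B i i = 0"
  using sgn_skew[of i i] by (simp add: sgn_if split: if_splits)

lemma eq_0_within_orbit:
  assumes "I \<in> orbits G" "k \<in> I" "k' \<in> I"
  shows "B k k' = 0"
proof (cases "k = k'")
  case False
  have "k' \<in> orbit G k" "k \<in> orbit G k'"
    using assms orbits_eq_orbit[OF perm_group] by blast+
  then have "B k k' \<le> 0" "B k' k \<le> 0"
    using admissible False unfolding admissible_def by auto
  then show ?thesis
    using pos_iff_neg[of k' k] by linarith
qed (simp add: diag_eq_0)

lemma no_path_within_orbit:
  assumes "I \<in> orbits G" "k \<in> I" "k' \<in> I" "0 < B k m" "0 < B m k'"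
  shows False
proof (cases "k = k'")
  case True
  then show False using assms(4,5) pos_iff_neg[of k m] by simp
next
  case False
  have "k' \<in> orbit G k"
    using assms orbits_eq_orbit[OF perm_group] by blast
  then show False
    using admissible False assms(4,5) unfolding admissible_def by blast
qed

lemma row_sign_coherent:
  assumes "K \<in> orbits G"
  shows "(\<forall>k\<in>K. 0 \<le> B i k) \<or> (\<forall>k\<in>K. B i k \<le> 0)"
proof (rule ccontr)
  assume "\<not> ?thesis"
  then obtain k k' where "k \<in> K" "k' \<in> K" "0 < B i k" "B i k' < 0"
    by (auto simp: not_le)
  then show False
    using no_path_within_orbit[OF assms \<open>k' \<in> K\<close> \<open>k \<in> K\<close>] pos_iff_neg[of k' i] by blast
qed

lemma col_sign_coherent:
  assumes "K \<in> orbits G"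
  shows "(\<forall>k\<in>K. 0 \<le> B k j) \<or> (\<forall>k\<in>K. B k j \<le> 0)"
proof (rule ccontr)
  assume "\<not> ?thesis"
  then obtain k k' where "k \<in> K" "k' \<in> K" "0 < B k j" "B k' j < 0"
    by (auto simp: not_le)
  then show False
    using no_path_within_orbit[OF assms \<open>k \<in> K\<close> \<open>k' \<in> K\<close>] pos_iff_neg[of j k'] by blast
qed

lemma block_sign_coherent:
  assumes I: "I \<in> orbits G" and K: "K \<in> orbits G"
  shows "(\<forall>i\<in>I. \<forall>k\<in>K. 0 \<le> B i k) \<or> (\<forall>i\<in>I. \<forall>k\<in>K. B i k \<le> 0)"
proof (rule ccontr)
  assume "\<not> ?thesis"
  then obtain i k i' k' where ik: "i \<in> I" "k \<in> K" "0 < B i k" and ik': "i' \<in> I" "k' \<in> K" "B i' k' < 0"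
    by (auto simp: not_le)
  obtain g where g: "g \<in> G" "g i' = i"
    using orbits_eq_orbit[OF perm_group I ik'(1)] ik(1) unfolding orbit_def by auto
  have "g k' \<in> K"
    using bij_betw_orbit[OF perm_group g(1) K] ik'(2) by (auto dest: bij_betw_imp_surj_on)
  moreover have "B i (g k') < 0"
    using automorphism[OF g(1)] g(2) ik'(3) by metis
  ultimately show False
    using row_sign_coherent[OF K, of i] ik by force
qed

lemma quot_mat_eq_sum:
  assumes I: "I \<in> orbits G" and J: "J \<in> orbits G" and "j \<in> J"
  shows "quot_mat B G I J = (\<Sum>i\<in>I. B i j)"
proof -
  define j0 where "j0 = (SOME j. j \<in> J)"
  have "j0 \<in> J"
    using \<open>j \<in> J\<close> unfolding j0_def by (rule someI)
  then obtain g where g: "g \<in> G" "g j0 = j"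
    using orbits_eq_orbit[OF perm_group J \<open>j0 \<in> J\<close>] \<open>j \<in> J\<close> unfolding orbit_def by auto
  have "(\<Sum>i\<in>I. B i j) = (\<Sum>i\<in>I. B (g i) (g j0))"
    using sum.reindex_bij_betw[OF bij_betw_orbit[OF perm_group g(1) I], of "\<lambda>i. B i j"] g(2) by simp
  also have "\<dots> = (\<Sum>i\<in>I. B i j0)"
    using automorphism[OF g(1)] by simp
  finally show ?thesis
    unfolding quot_mat_def j0_def by simp
qed

lemma orbit_mut_eq_mat_mut_set:
  assumes "K \<in> orbits G"
  shows "orbit_mut K B = mat_mut_set K B"
proof -
  define xs where "xs = (SOME xs. distinct xs \<and> set xs = K)"
  have xs: "distinct xs" "set xs = K"
    unfolding xs_def by (metis (mono_tags, lifting) finite finite_distinct_list someI_ex)+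
  moreover have "\<forall>k\<in>set xs. \<forall>k'\<in>set xs. B k k' = 0"
    using eq_0_within_orbit[OF assms] xs(2) by blast
  ultimately show ?thesis
    unfolding orbit_mut_def xs_def[symmetric] by (simp add: fold_mat_mut_eq_mat_mut_set)
qed

lemma seed_mut_set_in_seeds:
  assumes "(B, x) \<in> seeds UNIV A" "K \<in> orbits G"
  shows "seed_mut_set UNIV K B x \<in> seeds UNIV A"
proof -
  obtain xs where xs: "distinct xs" "set xs = K"
    using finite_distinct_list[OF finite, of K] by blast
  moreover have "\<forall>k\<in>set xs. \<forall>k'\<in>set xs. B k k' = 0"
    using eq_0_within_orbit[OF assms(2)] xs(2) by blast
  ultimately have "seed_mut_set UNIV K B x = fold (seed_mut UNIV) xs (B, x)"
    by (simp add: fold_seed_mut_eq_seed_mut_set)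
  with assms(1) show ?thesis
    by (simp add: fold_seed_mut_in_seeds)
qed

lemma quot_mat_mat_mut_set:
  assumes K: "K \<in> orbits G" and I: "I \<in> orbits G" and J: "J \<in> orbits G"
  shows "quot_mat (mat_mut_set K B) G I J = mat_mut K (quot_mat B G) I J"
proof -
  define j0 where "j0 = (SOME j. j \<in> J)"
  have j0: "j0 \<in> J"
    using J orbit_self[OF perm_group] unfolding j0_def orbits_def by (metis rangeE someI)
  have quot: "quot_mat C G I' J = (\<Sum>i\<in>I'. C i j0)" for C I'
    by (simp add: quot_mat_def j0_def)
  show ?thesis
  proof (cases "I = K \<or> J = K")
    case True
    then have "(\<Sum>i\<in>I. mat_mut_set K B i j0) = (\<Sum>i\<in>I. - B i j0)"
      using j0 by (intro sum.cong refl) (auto simp: mat_mut_set_def)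
    then show ?thesis
      using True by (auto simp: quot mat_mut_eq sum_negf)
  next
    case False
    then have outside: "i \<notin> K" if "i \<in> I" for i
      using that orbits_eq_orbit[OF perm_group I] orbits_eq_orbit[OF perm_group K] by metis
    have "j0 \<notin> K"
      using False j0 orbits_eq_orbit[OF perm_group J] orbits_eq_orbit[OF perm_group K] by metis
    obtain k0 where "k0 \<in> K"
      using K orbit_self[OF perm_group] unfolding orbits_def by blast
    have "(\<Sum>i\<in>I. mat_mut_set K B i j0) = (\<Sum>i\<in>I. B i j0 + (\<Sum>k\<in>K. mut_shift (B i k) (B k j0)))"
      using outside \<open>j0 \<notin> K\<close> by (intro sum.cong refl) (auto simp: mat_mut_set_def)
    also have "\<dots> = (\<Sum>i\<in>I. B i j0) + (\<Sum>i\<in>I. \<Sum>k\<in>K. mut_shift (B i k) (B k j0))"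
      by (simp add: sum.distrib)
    also have "(\<Sum>i\<in>I. \<Sum>k\<in>K. mut_shift (B i k) (B k j0)) = mut_shift (quot_mat B G I K) (\<Sum>k\<in>K. B k j0)"
      using block_sign_coherent[OF I K] col_sign_coherent[OF K] quot_mat_eq_sum[OF I K]
      by (intro sum_mut_shift_sign_coherent[OF _ _ \<open>k0 \<in> K\<close>]) auto
    finally show ?thesis
      using False by (simp add: quot mat_mut_eq)
  qed
qed

lemma exchange_var_quot:
  assumes K: "K \<in> orbits G" and "i \<in> K"
    and C: "\<forall>I\<in>orbits G. \<forall>J\<in>orbits G. C I J = quot_mat B G I J"
    and y: "\<forall>j. y (orbit G j) = (\<lambda>v. x j (\<lambda>j. v (orbit G j)))"
  shows "exchange_var (orbits G) C y K v = exchange_var UNIV B x i (\<lambda>j. v (orbit G j))"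
proof -
  define w where "w J = y J v" for J
  have x_w: "x j (\<lambda>j. v (orbit G j)) = w (orbit G j)" for j
    using y by (simp add: w_def)
  have col_sum: "(\<Sum>j\<in>J. B j i) = C J K" if "J \<in> orbits G" for J
    using quot_mat_eq_sum[OF that K \<open>i \<in> K\<close>] C that K by simp
  have "(\<Prod>j | 0 < B j i. w (orbit G j) ^ nat (B j i))
      = (\<Prod>J\<in>{J\<in>orbits G. 0 < (\<Sum>j\<in>J. B j i)}. w J ^ nat (\<Sum>j\<in>J. B j i))"
    using col_sign_coherent by (intro prod_power_group_orbits[OF perm_group]) blast
  also have "\<dots> = (\<Prod>J\<in>{J\<in>orbits G. 0 < C J K}. w J ^ nat (C J K))"
    by (intro prod.cong) (auto simp: col_sum)
  finally have pos: "(\<Prod>j | 0 < B j i. w (orbit G j) ^ nat (B j i))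
      = (\<Prod>J\<in>{J\<in>orbits G. 0 < C J K}. w J ^ nat (C J K))" .
  have "(\<Prod>j | 0 < - B j i. w (orbit G j) ^ nat (- B j i))
      = (\<Prod>J\<in>{J\<in>orbits G. 0 < (\<Sum>j\<in>J. - B j i)}. w J ^ nat (\<Sum>j\<in>J. - B j i))"
    using col_sign_coherent by (intro prod_power_group_orbits[OF perm_group]) force
  also have "\<dots> = (\<Prod>J\<in>{J\<in>orbits G. C J K < 0}. w J ^ nat (- C J K))"
    by (intro prod.cong) (auto simp: sum_negf col_sum)
  finally have neg: "(\<Prod>j | B j i < 0. w (orbit G j) ^ nat (- B j i))
      = (\<Prod>J\<in>{J\<in>orbits G. C J K < 0}. w J ^ nat (- C J K))"
    by simp
  have "orbit G i = K"
    using orbits_eq_orbit[OF perm_group K \<open>i \<in> K\<close>] by simp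
  then show ?thesis
    unfolding exchange_var_def using pos neg x_w by (simp add: w_def)
qed

lemma is_folding_seed_mut:
  assumes fold: "is_folding G (B, x) S'" and K: "K \<in> orbits G"
  shows "is_folding G (seed_mut_set UNIV K B x) (seed_mut (orbits G) K S')"
proof -
  obtain C y where S': "S' = (C, y)"
    by fastforce
  have C: "\<forall>I\<in>orbits G. \<forall>J\<in>orbits G. C I J = quot_mat B G I J"
    and y: "\<forall>j. y (orbit G j) = (\<lambda>v. x j (\<lambda>j. v (orbit G j)))"
    using fold unfolding is_folding_def S' by simp_all
  have "mat_mut K C I J = quot_mat (mat_mut_set K B) G I J" if "I \<in> orbits G" "J \<in> orbits G" for I J
    using C that K by (simp add: mat_mut_eq quot_mat_mat_mut_set[OF K that])
  moreover have "(y(K := exchange_var (orbits G) C y K)) (orbit G i)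
      = (\<lambda>v. (if i \<in> K then exchange_var UNIV B x i else x i) (\<lambda>j. v (orbit G j)))" for i
  proof (cases "i \<in> K")
    case True
    then have "orbit G i = K"
      using orbits_eq_orbit[OF perm_group K] by simp
    with True show ?thesis
      using exchange_var_quot[OF K True C y] by auto
  next
    case False
    then have "orbit G i \<noteq> K"
      using orbit_self[OF perm_group, of i] by blast
    with False show ?thesis
      using y by simp
  qed
  ultimately show ?thesis
    unfolding is_folding_def S' seed_mut_eq seed_mut_set_def by simp
qed

end

lemma stable_sign_skew_admissible:
  assumes "stable A G" "skew_symmetrizer D A" "set Is \<subseteq> orbits G"
  shows "sign_skew_admissible (fold orbit_mut Is A) G"
proof
  show "admissible (fold orbit_mut Is A) G"
    using assms(1,3) unfolding stable_def by blast
  show "sgn (fold orbit_mut Is A j i) = - sgn (fold orbit_mut Is A i j)" for i j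
    using skew_symmetrizer_sgn[OF skew_symmetrizer_fold_orbit_mut[OF assms(2)]] .
qed

lemma seeds_quot_mat_is_folding:
  fixes A :: "'a::finite \<Rightarrow> 'a \<Rightarrow> int"
  assumes stable: "stable A G" and skew: "skew_symmetrizer D A"
    and "S' \<in> seeds (orbits G) (quot_mat A G)"
  shows "\<exists>Is x. set Is \<subseteq> orbits G \<and> (fold orbit_mut Is A, x) \<in> seeds UNIV A
           \<and> is_folding G (fold orbit_mut Is A, x) S'"
  using assms(3)
proof (induction rule: seeds.induct)
  case init
  have "is_folding G (A, \<lambda>i u. u i) (quot_mat A G, \<lambda>i u. u i)"
    by (simp add: is_folding_def)
  then show ?case
    by (intro exI[of _ "[]"] exI[of _ "\<lambda>i u. u i"]) (simp add: seeds.init)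
next
  case (mut S' K)
  then obtain Is x where Is: "set Is \<subseteq> orbits G"
    and seed: "(fold orbit_mut Is A, x) \<in> seeds UNIV A"
    and fold: "is_folding G (fold orbit_mut Is A, x) S'"
    by blast
  define B where "B = fold orbit_mut Is A"
  interpret sign_skew_admissible B G
    unfolding B_def using stable skew Is by (rule stable_sign_skew_admissible)
  define x' where "x' = snd (seed_mut_set UNIV K B x)"
  have seed_mut: "seed_mut_set UNIV K B x = (fold orbit_mut (Is @ [K]) A, x')"
    using orbit_mut_eq_mat_mut_set[OF mut.hyps(2)] by (simp add: seed_mut_set_def x'_def B_def)
  show ?case
  proof (intro exI conjI)
    show "set (Is @ [K]) \<subseteq> orbits G"
      using Is mut.hyps(2) by simp
    show "(fold orbit_mut (Is @ [K]) A, x') \<in> seeds UNIV A"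
      using seed_mut_set_in_seeds[OF seed[folded B_def] mut.hyps(2)] by (simp add: seed_mut)
    show "is_folding G (fold orbit_mut (Is @ [K]) A, x') (seed_mut (orbits G) K S')"
      using is_folding_seed_mut[OF fold[folded B_def] mut.hyps(2)] by (simp add: seed_mut)
  qed
qed

theorem mainTheorem14:
  fixes A :: "'a::finite \<Rightarrow> 'a \<Rightarrow> int" and G :: "('a \<Rightarrow> 'a) set"
  assumes "skew_symmetrizable A"
    and "admissible A G"
    and "stable A G"
    and "\<forall>f\<in>cluster_vars UNIV A. positive_laurent UNIV f"
  shows "\<forall>f\<in>cluster_vars (orbits G) (quot_mat A G). positive_laurent (orbits G) f"
proof
  fix f assume "f \<in> cluster_vars (orbits G) (quot_mat A G)"
  then obtain S' I where S': "S' \<in> seeds (orbits G) (quot_mat A G)" "I \<in> orbits G" "f = snd S' I"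
    unfolding cluster_vars_def by force
  obtain D where "skew_symmetrizer D A"
    using assms(1) skew_symmetrizable_iff by blast
  then obtain Is x where seed: "(fold orbit_mut Is A, x) \<in> seeds UNIV A"
    and fold: "is_folding G (fold orbit_mut Is A, x) S'"
    using seeds_quot_mat_is_folding[OF assms(3) _ S'(1)] by blast
  obtain i where i: "I = orbit G i"
    using S'(2) unfolding orbits_def by blast
  have "positive_laurent UNIV (x i)"
    using assms(4) seed unfolding cluster_vars_def by blast
  then have "positive_laurent (range (orbit G)) (\<lambda>v. x i (\<lambda>j. v (orbit G j)))"
    by (rule positive_laurent_substitute)
  then show "positive_laurent (orbits G) f"
    using fold S'(3) i unfolding is_folding_def orbits_def by simp
qed

end
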